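(* For every $\epsilon>0$ and $R>0$ there exists an integer $N=N(\epsilon,R)$ such that for every $\theta\in[0,1)$ and every integer $n\geq N$, the set $\varphi_\theta(\mathbb N)$ is $\epsilon$-close in the open disc of radius $R$ centered at $\varphi_\theta(n)$ to some affine lattice which is equivalent, up to an orientation-preserving affine similarity of $\mathbb C$, to the lattice $\mathbb Z+\mathbb Z\,\frac{4i\pi n}{1+4i\pi\{\theta\} n}$.
   Context: For $\theta\in\mathbb R$, the phyllotactic map $\varphi_\theta:\mathbb N\to\mathbb C$ is $\varphi_\theta(n)=\sqrt{n}\,e^{2i\pi\theta n}$, and $\varphi_\theta(\mathbb N)$ is its image. $\{\theta\}=\theta-\lfloor\theta\rfloor\in[0,1)$ is the fractional part. An affine lattice is a set $\alpha+\Gamma$ with $\alpha\in\mathbb C$ and $\Gamma=\mathbb Z\omega_1+\mathbb Z\omega_2$ for $\mathbb R$-linearly independent $\omega_1,\omega_2\in\mathbb C$; two affine lattices are equivalent if one is the image of the other under a map $z\mapsto \lambda z+\beta$ with $\lambda\in\mathbb C^*$, $\beta\in\mathbb C$. For a metric space $E$, $x\in E$, $\epsilon,R>0$, two discrete subsets $A,B\subset E$ are $\epsilon$-close in the open ball of radius $R$ centered at $x$ if there exist subsets $A'\subset A$, $B'\subset B$ containing all points of $A$, respectively $B$, at distance at most $R$ from $x$, and a bijection $\psi:A'\to B'$ with $\mathrm{dist}(a,\psi(a))<\epsilon$ for all $a\in A'$. Here $E=\mathbb C$ with the Euclidean metric. *)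

theory Defs
  imports "HOL-Analysis.Analysis"
begin

definition phyllo :: "real \<Rightarrow> nat \<Rightarrow> complex" where
  "phyllo \<theta> n = complex_of_real (sqrt (real n)) * exp (2 * \<i> * complex_of_real pi * complex_of_real \<theta> * of_nat n)"

definition eps_close_in_ball :: "complex set \<Rightarrow> complex set \<Rightarrow> complex \<Rightarrow> real \<Rightarrow> real \<Rightarrow> bool" where
  "eps_close_in_ball A B x \<epsilon> R \<longleftrightarrow>
     (\<exists>A' B' \<psi>. A' \<subseteq> A \<and> B' \<subseteq> B \<and>
        {a \<in> A. dist a x \<le> R} \<subseteq> A' \<and> {b \<in> B. dist b x \<le> R} \<subseteq> B' \<and>
        bij_betw \<psi> A' B' \<and> (\<forall>a\<in>A'. dist a (\<psi> a) < \<epsilon>))"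

definition lattice_gen :: "complex \<Rightarrow> complex \<Rightarrow> complex set" where
  "lattice_gen \<omega>1 \<omega>2 = {of_int a * \<omega>1 + of_int b * \<omega>2 | a b. True}"

definition affine_lattice :: "complex set \<Rightarrow> bool" where
  "affine_lattice L \<longleftrightarrow>
     (\<exists>\<alpha> \<omega>1 \<omega>2. (\<forall>s t :: real. of_real s * \<omega>1 + of_real t * \<omega>2 = 0 \<longrightarrow> s = 0 \<and> t = 0) \<and>
        L = (\<lambda>z. \<alpha> + z) ` lattice_gen \<omega>1 \<omega>2)"

definition similar_sets :: "complex set \<Rightarrow> complex set \<Rightarrow> bool" where
  "similar_sets A B \<longleftrightarrow> (\<exists>c \<beta>. c \<noteq> 0 \<and> B = (\<lambda>z. c * z + \<beta>) ` A)"

end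

theory Submission
  imports Defs
begin

text \<open>
  Write s = sqrt n and u = exp(2 i pi theta n), so that phi(n) = u s. For every integer b,
  phi(n + a) = u sqrt(s^2 + a) exp(2 i pi (theta a + b)), which to first order is
  u (s + a / (2 s) + 2 i pi s (theta a + b)): the point indexed by (a, b) of an affine lattice
  with shape ratio 4 i pi n / (1 + 4 i pi theta n). Points of either set within distance R of
  phi(n) have |a| <= 3 R s and |theta a + b| <= 2 R / s, and on this window the second-order
  error is O(R^2 / s), hence below epsilon for large n. Matching phi(n + a) with the lattice
  point (a, b) is injective because |theta a + b| < 1/2 determines b from a.
\<close>

lemma norm_cis_sub_one_sub_linear_le: "cmod (cis a - 1 - \<i> * of_real a) \<le> a\<^sup>2"
proof -
  have "norm (exp (\<i> * of_real a) - (\<Sum>k\<le>1. (\<i> * of_real a) ^ k / fact k))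
          \<le> exp \<bar>Re (\<i> * of_real a)\<bar> * norm (\<i> * of_real a) ^ Suc 1 / fact 1"
    by (rule Taylor_exp)
  then show ?thesis
    by (simp add: cis_conv_exp power2_eq_square diff_diff_eq norm_mult)
qed

lemma abs_sin_ge_half:
  fixes y :: real
  assumes "\<bar>y\<bar> \<le> 1"
  shows "\<bar>y\<bar> / 2 \<le> \<bar>sin y\<bar>"
proof -
  let ?p = "1 + \<i> * of_real y - of_real (y\<^sup>2 / 2)"
  have "norm (exp (\<i> * of_real y) - (\<Sum>k\<le>2. (\<i> * of_real y) ^ k / fact k))
          \<le> exp \<bar>Re (\<i> * of_real y)\<bar> * norm (\<i> * of_real y) ^ Suc 2 / fact 2"
    by (rule Taylor_exp)
  moreover have "(\<Sum>k\<le>2. (\<i> * of_real y) ^ k / fact k) = ?p"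
    by (simp add: eval_nat_numeral power_mult_distrib)
  ultimately have taylor: "cmod (cis y - ?p) \<le> \<bar>y\<bar> ^ 3 / 2"
    by (simp add: cis_conv_exp norm_mult)
  have "\<bar>sin y - y\<bar> = \<bar>Im (cis y - ?p)\<bar>"
    by simp
  also have "\<dots> \<le> \<bar>y\<bar> ^ 3 / 2"
    using abs_Im_le_cmod taylor by (rule order_trans)
  also have "\<dots> \<le> \<bar>y\<bar> / 2"
  proof -
    have "\<bar>y\<bar> * \<bar>y\<bar> * \<bar>y\<bar> \<le> 1 * \<bar>y\<bar>"
      using assms by (intro mult_right_mono mult_le_one) auto
    then show ?thesis
      by (simp add: power3_eq_cube)
  qed
  finally show ?thesis
    by linarith
qed

lemma abs_sin_ge_divide_pi:
  assumes "\<bar>y\<bar> \<le> pi / 2"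
  shows "\<bar>y\<bar> / pi \<le> \<bar>sin y\<bar>"
proof (cases "\<bar>y\<bar> \<le> 1")
  case True
  have "\<bar>y\<bar> / pi \<le> \<bar>y\<bar> / 2"
    using pi_gt3 by (intro divide_left_mono) auto
  then show ?thesis
    using abs_sin_ge_half[OF True] by linarith
next
  case False
  have "1 / 2 \<le> sin (1::real)"
    using abs_sin_ge_half[of 1] sin_gt_zero_02[of 1] by simp
  also have "sin 1 \<le> sin \<bar>y\<bar>"
    using False assms by (intro sin_monotone_2pi_le) auto
  also have "\<dots> = \<bar>sin y\<bar>"
    using assms sin_ge_zero[of "\<bar>y\<bar>"] by (cases "y \<ge> 0") auto
  finally have "1 / 2 \<le> \<bar>sin y\<bar>" .
  moreover have "\<bar>y\<bar> / pi \<le> 1 / 2"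
    using assms pi_gt_zero by (simp add: divide_simps)
  ultimately show ?thesis
    by linarith
qed

lemma norm_cis_double_sub_one: "cmod (cis (2 * y) - 1) = 2 * \<bar>sin y\<bar>"
proof -
  have "(cmod (cis (2 * y) - 1))\<^sup>2 = (cos (2 * y) - 1)\<^sup>2 + (sin (2 * y))\<^sup>2"
    by (simp add: cmod_power2)
  also have "\<dots> = 2 - 2 * cos (2 * y)"
    by (simp add: power2_diff sin_squared_eq algebra_simps)
  also have "\<dots> = (2 * \<bar>sin y\<bar>)\<^sup>2"
    by (simp add: cos_double_sin power_mult_distrib)
  finally show ?thesis
    by (metis abs_of_nonneg norm_ge_zero power2_eq_iff_nonneg zero_le_mult_iff zero_le_numeral abs_ge_zero)
qed

lemma norm_cis_two_pi_sub_one_ge: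
  assumes "\<bar>d\<bar> \<le> 1 / 2"
  shows "2 * \<bar>d\<bar> \<le> cmod (cis (2 * pi * d) - 1)"
proof -
  have "\<bar>pi * d\<bar> / pi \<le> \<bar>sin (pi * d)\<bar>"
    using assms pi_gt_zero by (intro abs_sin_ge_divide_pi) (simp add: abs_mult)
  then show ?thesis
    using norm_cis_double_sub_one[of "pi * d"] by (simp add: abs_mult mult.assoc)
qed

lemma abs_sqrt_add_sub_le:
  fixes s w c :: real
  assumes "0 < s" "\<bar>w\<bar> \<le> c * s" "c \<le> s"
  shows "\<bar>sqrt (s\<^sup>2 + w) - s\<bar> \<le> c"
proof -
  define t where "t = sqrt (s\<^sup>2 + w)"
  have "c * s \<le> s\<^sup>2"
    using assms by (simp add: power2_eq_square mult_right_mono)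
  then have "t\<^sup>2 = s\<^sup>2 + w" "0 \<le> t"
    using assms unfolding t_def by auto
  then have "(t - s) * (t + s) = w"
    by (simp add: power2_eq_square algebra_simps)
  then have "\<bar>t - s\<bar> * (t + s) = \<bar>w\<bar>"
    using assms \<open>0 \<le> t\<close> by (metis abs_mult abs_of_pos add_nonneg_pos)
  then have "\<bar>t - s\<bar> * s \<le> c * s"
    using assms \<open>0 \<le> t\<close> by (smt (verit) mult_left_mono abs_ge_zero)
  then show ?thesis
    unfolding t_def using assms by simp
qed

lemma abs_sqrt_add_sub_linear_le:
  fixes s w c :: real
  assumes "0 < s" "\<bar>w\<bar> \<le> c * s" "c \<le> s"
  shows "\<bar>sqrt (s\<^sup>2 + w) - s - w / (2 * s)\<bar> \<le> c\<^sup>2 / (2 * s)"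
proof -
  define t where "t = sqrt (s\<^sup>2 + w)"
  have "c * s \<le> s\<^sup>2"
    using assms by (simp add: power2_eq_square mult_right_mono)
  then have "t\<^sup>2 = s\<^sup>2 + w"
    using assms unfolding t_def by auto
  then have "t - s - w / (2 * s) = - ((t - s)\<^sup>2 / (2 * s))"
    using assms by (simp add: field_simps power2_eq_square)
  moreover have "(t - s)\<^sup>2 \<le> c\<^sup>2"
    using abs_sqrt_add_sub_le[OF assms] unfolding t_def
    by (metis abs_ge_zero power2_abs power_mono)
  ultimately show ?thesis
    unfolding t_def using assms by (simp add: divide_right_mono)
qed

lemma norm_sqrt_cis_sub_tangent_le:
  fixes s w c \<delta> \<alpha> :: real
  assumes s: "0 < s" and w: "\<bar>w\<bar> \<le> c * s" "c \<le> s" and \<alpha>: "\<bar>\<alpha>\<bar> \<le> \<delta> / s"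
  shows "cmod (of_real (sqrt (s\<^sup>2 + w)) * cis \<alpha> - (of_real s + of_real (w / (2 * s)) + \<i> * of_real (\<alpha> * s)))
           \<le> (c + 2 * \<delta>)\<^sup>2 / (2 * s)"
proof -
  define t where "t = sqrt (s\<^sup>2 + w)"
  have "0 \<le> c" "0 \<le> \<delta>"
    using s w \<alpha> by (auto simp: zero_le_mult_iff zero_le_divide_iff dest: order_trans[OF abs_ge_zero])
  have ts: "\<bar>t - s\<bar> \<le> c"
    unfolding t_def using abs_sqrt_add_sub_le[OF s w] .
  have "c * s \<le> s\<^sup>2"
    using s w by (simp add: power2_eq_square mult_right_mono)
  then have "0 \<le> t" "t \<le> 2 * s"
    using ts w unfolding t_def by auto
  have "\<alpha>\<^sup>2 \<le> (\<delta> / s)\<^sup>2"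
    using \<alpha> by (metis abs_ge_zero power2_abs power_mono)
  then have taylor: "cmod (of_real t * (cis \<alpha> - 1 - \<i> * of_real \<alpha>)) \<le> 2 * \<delta>\<^sup>2 / s"
  proof -
    have "cmod (of_real t * (cis \<alpha> - 1 - \<i> * of_real \<alpha>)) \<le> (2 * s) * (\<delta> / s)\<^sup>2"
      unfolding norm_mult using \<open>0 \<le> t\<close> \<open>t \<le> 2 * s\<close> \<open>\<alpha>\<^sup>2 \<le> (\<delta> / s)\<^sup>2\<close>
      by (intro mult_mono order_trans[OF norm_cis_sub_one_sub_linear_le]) auto
    then show ?thesis
      using s by (simp add: power2_eq_square)
  qed
  have cross: "cmod (\<i> * of_real \<alpha> * of_real (t - s)) \<le> c * \<delta> / s"
  proof -
    have "cmod (\<i> * of_real \<alpha> * of_real (t - s)) = \<bar>\<alpha>\<bar> * \<bar>t - s\<bar>"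
      by (simp add: norm_mult del: of_real_diff)
    also have "\<dots> \<le> (\<delta> / s) * c"
      using \<alpha> ts by (intro mult_mono) auto
    finally show ?thesis
      by (simp add: mult.commute)
  qed
  have "of_real t * cis \<alpha> - (of_real s + of_real (w / (2 * s)) + \<i> * of_real (\<alpha> * s))
      = of_real (t - s - w / (2 * s)) + of_real t * (cis \<alpha> - 1 - \<i> * of_real \<alpha>) + \<i> * of_real \<alpha> * of_real (t - s)"
    by (simp add: algebra_simps)
  then have "cmod (of_real t * cis \<alpha> - (of_real s + of_real (w / (2 * s)) + \<i> * of_real (\<alpha> * s)))
      \<le> \<bar>t - s - w / (2 * s)\<bar> + cmod (of_real t * (cis \<alpha> - 1 - \<i> * of_real \<alpha>))
        + cmod (\<i> * of_real \<alpha> * of_real (t - s))"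
    by (metis norm_of_real norm_triangle_le norm_triangle_ineq add_mono order_refl)
  also have "\<dots> \<le> c\<^sup>2 / (2 * s) + 2 * \<delta>\<^sup>2 / s + c * \<delta> / s"
    using abs_sqrt_add_sub_linear_le[OF s w] taylor cross unfolding t_def by linarith
  also have "\<dots> \<le> (c + 2 * \<delta>)\<^sup>2 / (2 * s)"
    using s \<open>0 \<le> c\<close> \<open>0 \<le> \<delta>\<close> by (simp add: field_simps power2_eq_square)
  finally show ?thesis
    unfolding t_def .
qed

lemma lattice_gen_scaled: "(*) c ` lattice_gen \<omega>1 \<omega>2 = lattice_gen (c * \<omega>1) (c * \<omega>2)"
  unfolding lattice_gen_def by (auto simp: algebra_simps intro!: image_eqI) blast

lemma real_independent_if_Im_cnj_mult:
  assumes "Im (cnj \<omega>1 * \<omega>2) \<noteq> 0" and "of_real s * \<omega>1 + of_real t * \<omega>2 = 0"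
  shows "s = 0 \<and> t = 0"
proof -
  have "of_real s * (cnj \<omega>1 * \<omega>1) + of_real t * (cnj \<omega>1 * \<omega>2) = 0"
    using arg_cong[OF assms(2), of "(*) (cnj \<omega>1)"] by (simp add: algebra_simps)
  moreover have "Im (of_real s * (cnj \<omega>1 * \<omega>1) + of_real t * (cnj \<omega>1 * \<omega>2)) = t * Im (cnj \<omega>1 * \<omega>2)"
    by simp
  ultimately have "t * Im (cnj \<omega>1 * \<omega>2) = 0"
    by simp
  then have "t = 0"
    using assms(1) by simp
  moreover have "\<omega>1 \<noteq> 0"
    using assms(1) by auto
  ultimately show ?thesis
    using assms(2) by simp
qed

lemma affine_lattice_affine_image:
  assumes "Im (cnj \<omega>1 * \<omega>2) \<noteq> 0" and "c \<noteq> 0"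
  shows "affine_lattice ((\<lambda>z. \<alpha> + c * z) ` lattice_gen \<omega>1 \<omega>2)"
proof -
  have "Im (cnj (c * \<omega>1) * (c * \<omega>2)) = (cmod c)\<^sup>2 * Im (cnj \<omega>1 * \<omega>2)"
    unfolding cmod_power2 by (simp add: algebra_simps power2_eq_square)
  then have "Im (cnj (c * \<omega>1) * (c * \<omega>2)) \<noteq> 0"
    using assms by simp
  moreover have "(\<lambda>z. \<alpha> + c * z) ` lattice_gen \<omega>1 \<omega>2 = (\<lambda>z. \<alpha> + z) ` lattice_gen (c * \<omega>1) (c * \<omega>2)"
    unfolding lattice_gen_scaled[symmetric] image_image ..
  ultimately show ?thesis
    unfolding affine_lattice_def by (blast dest: real_independent_if_Im_cnj_mult)
qed

lemma similar_sets_affine_image_lattice_gen: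
  assumes "\<omega>1 \<noteq> 0" and "c \<noteq> 0"
  shows "similar_sets ((\<lambda>z. \<alpha> + c * z) ` lattice_gen \<omega>1 \<omega>2) (lattice_gen 1 (\<omega>2 / \<omega>1))"
proof -
  have "(\<lambda>z. z / (c * \<omega>1) - \<alpha> / (c * \<omega>1)) ` (\<lambda>z. \<alpha> + c * z) ` lattice_gen \<omega>1 \<omega>2
      = (*) (1 / \<omega>1) ` lattice_gen \<omega>1 \<omega>2"
    unfolding image_image using assms by (intro image_cong) (auto simp: field_simps)
  also have "\<dots> = lattice_gen (1 / \<omega>1 * \<omega>1) (1 / \<omega>1 * \<omega>2)"
    by (rule lattice_gen_scaled)
  also have "\<dots> = lattice_gen 1 (\<omega>2 / \<omega>1)"
    using assms by simp
  finally show ?thesis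
    unfolding similar_sets_def using assms
    by (intro exI[of _ "1 / (c * \<omega>1)"] exI[of _ "- \<alpha> / (c * \<omega>1)"]) (simp add: diff_divide_distrib)
qed

definition tangent_offset :: "real \<Rightarrow> nat \<Rightarrow> int \<Rightarrow> int \<Rightarrow> complex" where
  "tangent_offset \<theta> n a b =
     of_real (a / (2 * sqrt n)) + \<i> * of_real (2 * pi * sqrt n * (\<theta> * a + b))"

lemma Re_tangent_offset [simp]: "Re (tangent_offset \<theta> n a b) = a / (2 * sqrt n)"
  and Im_tangent_offset [simp]: "Im (tangent_offset \<theta> n a b) = 2 * pi * sqrt n * (\<theta> * a + b)"
  by (simp_all add: tangent_offset_def)

definition tangent_lattice :: "real \<Rightarrow> nat \<Rightarrow> complex set" where
  "tangent_lattice \<theta> n =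
     (\<lambda>z. phyllo \<theta> n + cis (2 * pi * \<theta> * n) * z) `
       lattice_gen (of_real (1 / (2 * sqrt n)) + \<i> * of_real (2 * pi * sqrt n * \<theta>))
                   (\<i> * of_real (2 * pi * sqrt n))"

lemma tangent_lattice_eq_range:
  "tangent_lattice \<theta> n = range (\<lambda>(a, b). phyllo \<theta> n + cis (2 * pi * \<theta> * n) * tangent_offset \<theta> n a b)"
proof -
  have "lattice_gen (of_real (1 / (2 * sqrt n)) + \<i> * of_real (2 * pi * sqrt n * \<theta>)) (\<i> * of_real (2 * pi * sqrt n))
      = range (\<lambda>(a, b). tangent_offset \<theta> n a b)"
    unfolding lattice_gen_def tangent_offset_def by (auto simp: algebra_simps)
  then show ?thesis
    unfolding tangent_lattice_def by (simp add: image_image case_prod_beta')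
qed

lemma affine_lattice_tangent_lattice:
  assumes "0 < n"
  shows "affine_lattice (tangent_lattice \<theta> n)"
  unfolding tangent_lattice_def using assms
  by (intro affine_lattice_affine_image) auto

lemma similar_sets_tangent_lattice:
  assumes "0 < n"
  shows "similar_sets (tangent_lattice \<theta> n)
           (lattice_gen 1 (4 * \<i> * complex_of_real pi * of_nat n /
                             (1 + 4 * \<i> * complex_of_real pi * complex_of_real \<theta> * of_nat n)))"
proof -
  define s where "s = sqrt n"
  define q where "q = 1 + 4 * \<i> * complex_of_real pi * complex_of_real \<theta> * of_nat n"
  have "0 < s" "s\<^sup>2 = n"
    using assms unfolding s_def by auto
  have sn: "complex_of_real s * complex_of_real s = of_nat n"
    using \<open>s\<^sup>2 = n\<close> by (metis of_real_mult of_real_of_nat_eq power2_eq_square)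
  have "q \<noteq> 0"
    unfolding q_def by (simp add: complex_eq_iff)
  have \<omega>1: "of_real (1 / (2 * s)) + \<i> * of_real (2 * pi * s * \<theta>) = q / (2 * of_real s)"
    unfolding q_def using \<open>0 < s\<close> by (simp add: field_simps sn[symmetric])
  have "\<i> * of_real (2 * pi * s) / (q / (2 * of_real s)) = 4 * \<i> * complex_of_real pi * of_nat n / q"
    using \<open>q \<noteq> 0\<close> \<open>0 < s\<close> by (simp add: field_simps sn[symmetric])
  moreover have "q / (2 * of_real s) \<noteq> 0"
    using \<open>q \<noteq> 0\<close> \<open>0 < s\<close> by simp
  ultimately show ?thesis
    unfolding tangent_lattice_def s_def[symmetric] \<omega>1 q_def[symmetric]
    by (metis similar_sets_affine_image_lattice_gen cis_neq_zero)
qed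

lemma phyllo_shift_eq:
  fixes \<theta> :: real and a b :: int
  assumes "0 \<le> int n + a"
  shows "phyllo \<theta> (nat (int n + a)) = cis (2 * pi * \<theta> * n) * (sqrt (real n + a) * cis (2 * pi * (\<theta> * a + b)))"
proof -
  have "cis (2 * pi * \<theta> * (real n + a)) = cis (2 * pi * \<theta> * n) * cis (2 * pi * (\<theta> * a + b)) * cis (2 * pi * of_int (- b))"
    by (simp add: cis_mult algebra_simps)
  also have "cis (2 * pi * of_int (- b)) = 1"
    by (metis cis_multiple_2pi Ints_of_int mult.commute)
  finally have "cis (2 * pi * \<theta> * (real n + a)) = cis (2 * pi * \<theta> * n) * cis (2 * pi * (\<theta> * a + b))"
    by simp
  moreover have "real (nat (int n + a)) = real n + a"
    using assms by simp
  ultimately show ?thesis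
    unfolding phyllo_def by (simp add: cis_conv_exp mult_ac)
qed

lemma phyllo_eq: "phyllo \<theta> n = cis (2 * pi * \<theta> * n) * sqrt n"
  using phyllo_shift_eq[of n 0 \<theta> 0] by simp

lemma norm_phyllo: "cmod (phyllo \<theta> m) = sqrt m"
  by (simp add: phyllo_eq norm_mult)

lemma polar_near_positive_real:
  fixes T s d R :: real
  assumes "0 \<le> T" "\<bar>d\<bar> \<le> 1 / 2" "2 * R < s"
    and near: "cmod (of_real T * cis (2 * pi * d) - of_real s) \<le> R"
  shows "\<bar>T - s\<bar> \<le> R" and "\<bar>d\<bar> \<le> 2 * R / s"
proof -
  have "0 < s"
    using near assms(3) norm_ge_zero[of "of_real T * cis (2 * pi * d) - of_real s"] by linarith
  show radial: "\<bar>T - s\<bar> \<le> R"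
    using norm_triangle_ineq3[of "of_real T * cis (2 * pi * d)" "of_real s"] near assms(1) \<open>0 < s\<close>
    by (simp add: norm_mult)
  have "of_real T * (cis (2 * pi * d) - 1) = (of_real T * cis (2 * pi * d) - of_real s) + of_real (s - T)"
    by (simp add: algebra_simps)
  then have "cmod (of_real T * (cis (2 * pi * d) - 1))
      \<le> cmod (of_real T * cis (2 * pi * d) - of_real s) + cmod (of_real (s - T))"
    by (metis norm_triangle_ineq)
  then have "T * cmod (cis (2 * pi * d) - 1) \<le> 2 * R"
    using near radial assms(1) by (simp add: norm_mult abs_minus_commute del: of_real_diff)
  moreover have "(s / 2) * (2 * \<bar>d\<bar>) \<le> T * cmod (cis (2 * pi * d) - 1)"
    using radial assms norm_cis_two_pi_sub_one_ge by (intro mult_mono) auto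
  ultimately show "\<bar>d\<bar> \<le> 2 * R / s"
    using assms(3) radial by (simp add: field_simps)
qed

definition phyllo_window :: "real \<Rightarrow> nat \<Rightarrow> real \<Rightarrow> (int \<times> int) set" where
  "phyllo_window \<theta> n R =
     {(a, b). \<bar>real_of_int a\<bar> \<le> 3 * R * sqrt n \<and> \<bar>\<theta> * real_of_int a + real_of_int b\<bar> \<le> 2 * R / sqrt n}"

lemma phyllo_window_nonneg:
  assumes "3 * R \<le> sqrt n" and "(a, b) \<in> phyllo_window \<theta> n R"
  shows "0 \<le> int n + a"
proof -
  have "3 * R * sqrt n \<le> sqrt n * sqrt n"
    using assms(1) by (intro mult_right_mono) auto
  then have "\<bar>real_of_int a\<bar> \<le> n"
    using assms(2) unfolding phyllo_window_def by simp
  then show ?thesis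
    by linarith
qed

lemma phyllo_near_in_window:
  fixes \<theta> :: real
  assumes R: "0 < R" "4 * R < sqrt n" and near: "dist (phyllo \<theta> m) (phyllo \<theta> n) \<le> R"
  shows "(int m - int n, - round (\<theta> * (int m - int n))) \<in> phyllo_window \<theta> n R"
proof -
  define s where "s = sqrt n"
  define a where "a = int m - int n"
  define d where "d = \<theta> * a - round (\<theta> * a)"
  have "0 < s"
    using R unfolding s_def by linarith
  have "s\<^sup>2 = n"
    unfolding s_def by simp
  have "\<bar>d\<bar> \<le> 1 / 2"
    unfolding d_def using of_int_round_abs_le[of "\<theta> * a"] by linarith
  have "phyllo \<theta> m = cis (2 * pi * \<theta> * n) * (sqrt m * cis (2 * pi * d))"
    using phyllo_shift_eq[of n a \<theta> "- round (\<theta> * a)"] unfolding a_def d_def by simp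
  then have "phyllo \<theta> m - phyllo \<theta> n = cis (2 * pi * \<theta> * n) * (sqrt m * cis (2 * pi * d) - s)"
    unfolding phyllo_eq s_def by (simp add: algebra_simps)
  then have "cmod (of_real (sqrt m) * cis (2 * pi * d) - of_real s) \<le> R"
    using near by (simp add: dist_norm norm_mult)
  moreover have "2 * R < s"
    using R unfolding s_def by linarith
  ultimately have radial: "\<bar>sqrt m - s\<bar> \<le> R" and angular: "\<bar>d\<bar> \<le> 2 * R / s"
    using polar_near_positive_real[of "sqrt m" d R s] \<open>\<bar>d\<bar> \<le> 1 / 2\<close> by auto
  have "(sqrt m - s) * (sqrt m + s) = real_of_int a"
    using \<open>s\<^sup>2 = n\<close> unfolding a_def by (simp add: power2_eq_square algebra_simps)
  then have "\<bar>real_of_int a\<bar> = \<bar>sqrt m - s\<bar> * (sqrt m + s)"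
    using \<open>0 < s\<close> by (metis abs_mult abs_of_pos add_nonneg_pos real_sqrt_ge_zero of_nat_0_le_iff)
  also have "\<dots> \<le> R * (2 * s + R)"
    using radial R \<open>0 < s\<close> by (intro mult_mono) auto
  also have "\<dots> \<le> 3 * R * s"
    using R unfolding s_def by (simp add: algebra_simps)
  finally show ?thesis
    using angular unfolding phyllo_window_def a_def d_def s_def by simp
qed

lemma tangent_near_in_window:
  assumes "0 < n" and near: "cmod (tangent_offset \<theta> n a b) \<le> R"
  shows "(a, b) \<in> phyllo_window \<theta> n R"
proof -
  define s where "s = sqrt n"
  have "0 < s"
    using assms unfolding s_def by simp
  have "\<bar>real_of_int a\<bar> / (2 * s) \<le> R"
    using abs_Re_le_cmod[of "tangent_offset \<theta> n a b"] near \<open>0 < s\<close>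
    unfolding s_def by (simp add: abs_div)
  then have radial: "\<bar>real_of_int a\<bar> \<le> 3 * R * s"
    using \<open>0 < s\<close> by (simp add: field_simps)
  have "2 * pi * (s * \<bar>\<theta> * a + b\<bar>) \<le> R"
    using abs_Im_le_cmod[of "tangent_offset \<theta> n a b"] near \<open>0 < s\<close>
    unfolding s_def by (simp add: abs_mult)
  moreover have "1 * (s * \<bar>\<theta> * a + b\<bar>) \<le> 2 * pi * (s * \<bar>\<theta> * a + b\<bar>)"
    using \<open>0 < s\<close> pi_gt3 by (intro mult_right_mono) auto
  moreover have "0 \<le> R"
    using near norm_ge_zero order_trans by blast
  ultimately have "s * \<bar>\<theta> * a + b\<bar> \<le> 2 * R"
    by linarith
  then have "\<bar>\<theta> * a + b\<bar> \<le> 2 * R / s"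
    using \<open>0 < s\<close> by (simp add: field_simps)
  with radial show ?thesis
    unfolding phyllo_window_def s_def by simp
qed

lemma inj_on_phyllo_window:
  assumes "0 < R" "4 * R < sqrt n"
  shows "inj_on (\<lambda>(a, b). phyllo \<theta> (nat (int n + a))) (phyllo_window \<theta> n R)"
proof (intro inj_onI, clarify)
  fix a b a' b'
  assume p: "(a, b) \<in> phyllo_window \<theta> n R" and q: "(a', b') \<in> phyllo_window \<theta> n R"
    and eq: "phyllo \<theta> (nat (int n + a)) = phyllo \<theta> (nat (int n + a'))"
  have "3 * R \<le> sqrt n"
    using assms by linarith
  then have "0 \<le> int n + a" "0 \<le> int n + a'"
    using p q by (auto intro: phyllo_window_nonneg)
  moreover have "nat (int n + a) = nat (int n + a')"
    using arg_cong[OF eq, of cmod] by (simp add: norm_phyllo)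
  ultimately have "a = a'"
    by simp
  have "2 * R / sqrt n < 1 / 2"
    using assms by (simp add: divide_less_eq)
  then have "\<bar>real_of_int b - real_of_int b'\<bar> < 1"
    using p q \<open>a = a'\<close> unfolding phyllo_window_def by auto
  with \<open>a = a'\<close> show "a = a' \<and> b = b'"
    by linarith
qed

lemma inj_tangent_offset:
  assumes "0 < n"
  shows "inj (\<lambda>(a, b). phyllo \<theta> n + cis (2 * pi * \<theta> * n) * tangent_offset \<theta> n a b)"
proof (intro injI, clarify)
  fix a b a' b' :: int
  assume "phyllo \<theta> n + cis (2 * pi * \<theta> * n) * tangent_offset \<theta> n a b
        = phyllo \<theta> n + cis (2 * pi * \<theta> * n) * tangent_offset \<theta> n a' b'"
  then have "tangent_offset \<theta> n a b = tangent_offset \<theta> n a' b'"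
    by simp
  then have "a / (2 * sqrt n) = a' / (2 * sqrt n)" "2 * pi * sqrt n * (\<theta> * a + b) = 2 * pi * sqrt n * (\<theta> * a' + b')"
    by (metis Re_tangent_offset, metis Im_tangent_offset)
  then show "a = a' \<and> b = b'"
    using assms by auto
qed

lemma dist_phyllo_tangent_le:
  assumes R: "0 < R" "4 * R < sqrt n" and window: "(a, b) \<in> phyllo_window \<theta> n R"
  shows "dist (phyllo \<theta> (nat (int n + a))) (phyllo \<theta> n + cis (2 * pi * \<theta> * n) * tangent_offset \<theta> n a b)
           \<le> (3 + 8 * pi)\<^sup>2 * R\<^sup>2 / (2 * sqrt n)"
proof -
  define s where "s = sqrt n"
  define \<alpha> where "\<alpha> = 2 * pi * (\<theta> * a + b)"
  have "0 < s" "3 * R \<le> s"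
    using R unfolding s_def by linarith+
  have "\<bar>real_of_int a\<bar> \<le> 3 * R * s" and "\<bar>\<theta> * a + b\<bar> \<le> 2 * R / s"
    using window unfolding phyllo_window_def s_def by auto
  have "\<bar>\<alpha>\<bar> = 2 * pi * \<bar>\<theta> * a + b\<bar>"
    unfolding \<alpha>_def by (simp add: abs_mult)
  also have "\<dots> \<le> 2 * pi * (2 * R / s)"
    using \<open>\<bar>\<theta> * a + b\<bar> \<le> 2 * R / s\<close> by (intro mult_left_mono) auto
  finally have "\<bar>\<alpha>\<bar> \<le> 4 * pi * R / s"
    by simp
  have "phyllo \<theta> (nat (int n + a)) = cis (2 * pi * \<theta> * n) * (of_real (sqrt (s\<^sup>2 + a)) * cis \<alpha>)"
    using phyllo_shift_eq[OF phyllo_window_nonneg[OF \<open>3 * R \<le> s\<close>[unfolded s_def] window]]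
    unfolding \<alpha>_def s_def by simp
  then have "phyllo \<theta> (nat (int n + a)) - (phyllo \<theta> n + cis (2 * pi * \<theta> * n) * tangent_offset \<theta> n a b)
      = cis (2 * pi * \<theta> * n) * (of_real (sqrt (s\<^sup>2 + a)) * cis \<alpha>
                                   - (of_real s + of_real (a / (2 * s)) + \<i> * of_real (\<alpha> * s)))"
    unfolding phyllo_eq[of \<theta> n] tangent_offset_def \<alpha>_def s_def by (simp add: algebra_simps)
  then have "dist (phyllo \<theta> (nat (int n + a))) (phyllo \<theta> n + cis (2 * pi * \<theta> * n) * tangent_offset \<theta> n a b)
      = cmod (of_real (sqrt (s\<^sup>2 + a)) * cis \<alpha> - (of_real s + of_real (a / (2 * s)) + \<i> * of_real (\<alpha> * s)))"
    by (simp add: dist_norm norm_mult)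
  also have "\<dots> \<le> (3 * R + 2 * (4 * pi * R))\<^sup>2 / (2 * s)"
    by (rule norm_sqrt_cis_sub_tangent_le) fact+
  also have "\<dots> = (3 + 8 * pi)\<^sup>2 * R\<^sup>2 / (2 * s)"
    by (simp add: power2_eq_square algebra_simps)
  finally show ?thesis
    unfolding s_def .
qed

lemma eps_close_in_ballI:
  assumes "inj_on f G" "inj_on g G" "f ` G \<subseteq> A" "g ` G \<subseteq> B"
    and "{a \<in> A. dist a x \<le> R} \<subseteq> f ` G" "{b \<in> B. dist b x \<le> R} \<subseteq> g ` G"
    and "\<And>p. p \<in> G \<Longrightarrow> dist (f p) (g p) < \<epsilon>"
  shows "eps_close_in_ball A B x \<epsilon> R"
  unfolding eps_close_in_ball_def
proof (intro exI conjI)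
  show "bij_betw (g \<circ> inv_into G f) (f ` G) (g ` G)"
    using bij_betw_trans[OF bij_betw_inv_into[OF inj_on_imp_bij_betw] inj_on_imp_bij_betw] assms(1,2) .
  show "\<forall>a\<in>f ` G. dist a ((g \<circ> inv_into G f) a) < \<epsilon>"
    using assms(1,7) by auto
qed (use assms in auto)

lemma eps_close_tangent_lattice:
  assumes R: "0 < R" "4 * R < sqrt n" and \<epsilon>: "(3 + 8 * pi)\<^sup>2 * R\<^sup>2 / (2 * sqrt n) < \<epsilon>"
  shows "eps_close_in_ball (range (phyllo \<theta>)) (tangent_lattice \<theta> n) (phyllo \<theta> n) \<epsilon> R"
proof -
  have "0 < n"
    using R by (auto intro: ccontr)
  let ?f = "\<lambda>(a, b). phyllo \<theta> (nat (int n + a))"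
  let ?g = "\<lambda>(a, b). phyllo \<theta> n + cis (2 * pi * \<theta> * n) * tangent_offset \<theta> n a b"
  show ?thesis
  proof (rule eps_close_in_ballI[where f = ?f and g = ?g and G = "phyllo_window \<theta> n R"])
    show "inj_on ?f (phyllo_window \<theta> n R)"
      using R by (rule inj_on_phyllo_window)
    show "inj_on ?g (phyllo_window \<theta> n R)"
      using inj_tangent_offset[OF \<open>0 < n\<close>] by (rule inj_on_subset) simp
    show "?f ` phyllo_window \<theta> n R \<subseteq> range (phyllo \<theta>)"
      by auto
    show "?g ` phyllo_window \<theta> n R \<subseteq> tangent_lattice \<theta> n"
      unfolding tangent_lattice_eq_range by auto
    show "{z \<in> range (phyllo \<theta>). dist z (phyllo \<theta> n) \<le> R} \<subseteq> ?f ` phyllo_window \<theta> n R"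
    proof clarify
      fix m
      assume "dist (phyllo \<theta> m) (phyllo \<theta> n) \<le> R"
      then have "(int m - int n, - round (\<theta> * (int m - int n))) \<in> phyllo_window \<theta> n R"
        using R by (rule phyllo_near_in_window[rotated 2])
      then show "phyllo \<theta> m \<in> ?f ` phyllo_window \<theta> n R"
        by (force intro: rev_image_eqI)
    qed
    show "{z \<in> tangent_lattice \<theta> n. dist z (phyllo \<theta> n) \<le> R} \<subseteq> ?g ` phyllo_window \<theta> n R"
      unfolding tangent_lattice_eq_range
      by (auto simp: dist_norm norm_mult intro!: tangent_near_in_window[OF \<open>0 < n\<close>])
    show "dist (?f p) (?g p) < \<epsilon>" if "p \<in> phyllo_window \<theta> n R" for p
      using dist_phyllo_tangent_le[OF R] that \<epsilon> by (cases p) fastforce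
  qed
qed

theorem theorem1:
  fixes \<epsilon> R :: real
  assumes "\<epsilon> > 0" and "R > 0"
  shows "\<exists>N :: nat. \<forall>\<theta> :: real. \<forall>n :: nat. 0 \<le> \<theta> \<and> \<theta> < 1 \<and> n \<ge> N \<longrightarrow>
           (\<exists>L. affine_lattice L \<and>
              similar_sets L (lattice_gen 1 (4 * \<i> * complex_of_real pi * of_nat n /
                                             (1 + 4 * \<i> * complex_of_real pi * complex_of_real (frac \<theta>) * of_nat n))) \<and>
              eps_close_in_ball (range (phyllo \<theta>)) L (phyllo \<theta> n) \<epsilon> R)"
proof -
  define C where "C = (3 + 8 * pi)\<^sup>2 * R\<^sup>2 / (2 * \<epsilon>)"
  define K where "K = 4 * R + C"
  have "0 \<le> C"
    unfolding C_def using assms by simp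
  show ?thesis
  proof (intro exI[of _ "nat \<lceil>K\<^sup>2\<rceil> + 1"] allI impI, elim conjE)
    fix \<theta> :: real and n :: nat
    assume "0 \<le> \<theta>" "\<theta> < 1" "nat \<lceil>K\<^sup>2\<rceil> + 1 \<le> n"
    then have "K\<^sup>2 < n"
      by linarith
    then have "K < sqrt n"
      using real_less_rsqrt by blast
    then have "4 * R < sqrt n" and "C < sqrt n"
      unfolding K_def using \<open>0 \<le> C\<close> assms by linarith+
    have "0 < sqrt n"
      using \<open>4 * R < sqrt n\<close> assms by linarith
    then have "0 < n"
      by simp
    have "(3 + 8 * pi)\<^sup>2 * R\<^sup>2 < \<epsilon> * (2 * sqrt n)"
      using \<open>C < sqrt n\<close> assms unfolding C_def by (simp add: pos_divide_less_eq mult_ac)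
    then have "(3 + 8 * pi)\<^sup>2 * R\<^sup>2 / (2 * sqrt n) < \<epsilon>"
      using \<open>0 < sqrt n\<close> by (simp add: pos_divide_less_eq)
    moreover have "frac \<theta> = \<theta>"
      using \<open>0 \<le> \<theta>\<close> \<open>\<theta> < 1\<close> by (simp add: frac_eq)
    ultimately show "\<exists>L. affine_lattice L \<and>
              similar_sets L (lattice_gen 1 (4 * \<i> * complex_of_real pi * of_nat n /
                                             (1 + 4 * \<i> * complex_of_real pi * complex_of_real (frac \<theta>) * of_nat n))) \<and>
              eps_close_in_ball (range (phyllo \<theta>)) L (phyllo \<theta> n) \<epsilon> R"
      using \<open>0 < n\<close> \<open>4 * R < sqrt n\<close> assms
      by (metis affine_lattice_tangent_lattice similar_sets_tangent_lattice eps_close_tangent_lattice)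
  qed
qed

end
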